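(* Suppose that either (1) the cost function $C$ is submodular and all valuations are supermodular, or (2) $C$ is submodular and player-wise symmetric and all valuations are symmetric. Then the Sequential Mechanism is groupstrategyproof, $1$-budget-balanced (i.e. $\sum_ip_i=C(\overrightarrow{ALG})$), is an $n$-approximation to the social cost, and satisfies individual rationality and no positive transfers.
   Context: Setting. $N=\{1,\dots,n\}$ is a set of players and $M_1,\dots,M_n$ are pairwise disjoint finite sets; $M=\bigcup_i M_i$; allocations $\vec S=(S_1,\dots,S_n)$ with $S_i\subseteq M_i$ are identified with subsets of $M$, with componentwise set operations. A cost function is a monotone $C:2^M\to\mathbb{R}_{\ge0}$ with $C(\emptyset)=0$; valuations $v_i:2^{M_i}\to\mathbb{R}_{\ge0}$ are monotone with $v_i(\emptyset)=0$. Sequential Mechanism: start with $ALG_i=\emptyset$ for all $i$. For $i=1,\dots,n$ in order: let $\mathcal A_i=\arg\max_{S\subseteq M_i}v_i(S)-[C(\overrightarrow{ALG}\cup S)-C(\overrightarrow{ALG})]$ (with $\overrightarrow{ALG}$ the current allocation, in which only players $1,\dots,i-1$ have been assigned), set $ALG_i$ to an element of $\mathcal A_i$ of maximum cardinality, and charge $p_i=C(ALG_1,\dots,ALG_i)-C(ALG_1,\dots,ALG_{i-1})$. Groupstrategyproof: for every $K\subseteq N$ and every joint misreport by $K$ (other players reporting truthfully), if $v_i(S_i)-p_i\le v_i(S'_i)-p'_i$ for all $i\in K$ then equality holds for all $i\in K$, where $(\vec S,\vec p)$ and $(\vec S',\vec p')$ are the outputs under truthful reports and under the misreport. Individual rationality: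 $p_i\le v_i(ALG_i)$; no positive transfers: $p_i\ge0$. Social cost $\pi(\vec S)=C(\vec S)+\sum_i[v_i(M_i)-v_i(S_i)]$; $n$-approximation: $\pi(\overrightarrow{ALG})\le n\min_{\vec S}\pi(\vec S)$ for all profiles. Supermodular $v$: $v(S)+v(T)\le v(S\cup T)+v(S\cap T)$; submodular $C$: $C(S)+C(T)\ge C(S\cup T)+C(S\cap T)$. Symmetric valuation: $v_i(S)=v_i(T)$ whenever $|S|=|T|$. Player-wise symmetric cost: $C(\vec S)=C(\vec T)$ whenever $|S_i|=|T_i|$ for all $i$. *)

theory Defs
  imports Complex_Main "HOL-Library.Disjoint_Sets"
begin

text \<open>Players are 1..n; M i is the finite item set of player i; an allocation is a
 family ALG with ALG i \<subseteq> M i, identified with the union of its components.\<close>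

definition items :: "nat \<Rightarrow> (nat \<Rightarrow> 'a set) \<Rightarrow> 'a set" where
  "items n M = (\<Union>i\<in>{1..n}. M i)"

definition valid_items :: "nat \<Rightarrow> (nat \<Rightarrow> 'a set) \<Rightarrow> bool" where
  "valid_items n M \<longleftrightarrow> (\<forall>i\<in>{1..n}. finite (M i)) \<and> disjoint_family_on M {1..n}"

definition cost_function :: "'a set \<Rightarrow> ('a set \<Rightarrow> real) \<Rightarrow> bool" where
  "cost_function A C \<longleftrightarrow> C {} = 0 \<and> (\<forall>S\<subseteq>A. 0 \<le> C S) \<and>
     (\<forall>S T. S \<subseteq> T \<longrightarrow> T \<subseteq> A \<longrightarrow> C S \<le> C T)"

definition valuation :: "'a set \<Rightarrow> ('a set \<Rightarrow> real) \<Rightarrow> bool" where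
  "valuation A v \<longleftrightarrow> v {} = 0 \<and> (\<forall>S\<subseteq>A. 0 \<le> v S) \<and>
     (\<forall>S T. S \<subseteq> T \<longrightarrow> T \<subseteq> A \<longrightarrow> v S \<le> v T)"

definition supermodular_on :: "'a set \<Rightarrow> ('a set \<Rightarrow> real) \<Rightarrow> bool" where
  "supermodular_on A v \<longleftrightarrow> (\<forall>S T. S \<subseteq> A \<longrightarrow> T \<subseteq> A \<longrightarrow> v S + v T \<le> v (S \<union> T) + v (S \<inter> T))"

definition submodular_on :: "'a set \<Rightarrow> ('a set \<Rightarrow> real) \<Rightarrow> bool" where
  "submodular_on A C \<longleftrightarrow> (\<forall>S T. S \<subseteq> A \<longrightarrow> T \<subseteq> A \<longrightarrow> C S + C T \<ge> C (S \<union> T) + C (S \<inter> T))"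

definition symmetric_on :: "'a set \<Rightarrow> ('a set \<Rightarrow> real) \<Rightarrow> bool" where
  "symmetric_on A v \<longleftrightarrow> (\<forall>S T. S \<subseteq> A \<longrightarrow> T \<subseteq> A \<longrightarrow> card S = card T \<longrightarrow> v S = v T)"

definition playerwise_symmetric :: "nat \<Rightarrow> (nat \<Rightarrow> 'a set) \<Rightarrow> ('a set \<Rightarrow> real) \<Rightarrow> bool" where
  "playerwise_symmetric n M C \<longleftrightarrow> (\<forall>S T. S \<subseteq> items n M \<longrightarrow> T \<subseteq> items n M \<longrightarrow>
     (\<forall>i\<in>{1..n}. card (S \<inter> M i) = card (T \<inter> M i)) \<longrightarrow> C S = C T)"

definition before :: "(nat \<Rightarrow> 'a set) \<Rightarrow> nat \<Rightarrow> 'a set" where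
  "before ALG i = (\<Union>j\<in>{1..<i}. ALG j)"

definition upto_alloc :: "(nat \<Rightarrow> 'a set) \<Rightarrow> nat \<Rightarrow> 'a set" where
  "upto_alloc ALG i = (\<Union>j\<in>{1..i}. ALG j)"

text \<open>ALG is a possible outcome of the Sequential Mechanism on reported valuations v
 (any choice among maximum-cardinality maximisers is allowed).\<close>
definition seq_run :: "nat \<Rightarrow> (nat \<Rightarrow> 'a set) \<Rightarrow> ('a set \<Rightarrow> real) \<Rightarrow> (nat \<Rightarrow> 'a set \<Rightarrow> real)
    \<Rightarrow> (nat \<Rightarrow> 'a set) \<Rightarrow> bool" where
  "seq_run n M C v ALG \<longleftrightarrow> (\<forall>i\<in>{1..n}.
     (let u = (\<lambda>S. v i S - (C (before ALG i \<union> S) - C (before ALG i))) in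
       ALG i \<subseteq> M i \<and>
       (\<forall>S. S \<subseteq> M i \<longrightarrow> u S \<le> u (ALG i)) \<and>
       (\<forall>S. S \<subseteq> M i \<longrightarrow> u S = u (ALG i) \<longrightarrow> card S \<le> card (ALG i))))"

definition payment :: "('a set \<Rightarrow> real) \<Rightarrow> (nat \<Rightarrow> 'a set) \<Rightarrow> nat \<Rightarrow> real" where
  "payment C ALG i = C (upto_alloc ALG i) - C (before ALG i)"

definition social_cost :: "nat \<Rightarrow> (nat \<Rightarrow> 'a set) \<Rightarrow> ('a set \<Rightarrow> real) \<Rightarrow> (nat \<Rightarrow> 'a set \<Rightarrow> real)
    \<Rightarrow> (nat \<Rightarrow> 'a set) \<Rightarrow> real" where
  "social_cost n M C v S = C (\<Union>i\<in>{1..n}. S i) + (\<Sum>i\<in>{1..n}. v i (M i) - v i (S i))"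

definition allocation :: "nat \<Rightarrow> (nat \<Rightarrow> 'a set) \<Rightarrow> (nat \<Rightarrow> 'a set) \<Rightarrow> bool" where
  "allocation n M S \<longleftrightarrow> (\<forall>i\<in>{1..n}. S i \<subseteq> M i)"

definition groupstrategyproof :: "nat \<Rightarrow> (nat \<Rightarrow> 'a set) \<Rightarrow> ('a set \<Rightarrow> real) \<Rightarrow>
    (nat \<Rightarrow> ('a set \<Rightarrow> real) \<Rightarrow> bool) \<Rightarrow> (nat \<Rightarrow> 'a set \<Rightarrow> real) \<Rightarrow> bool" where
  "groupstrategyproof n M C D v \<longleftrightarrow>
    (\<forall>K w ALG ALG'. K \<subseteq> {1..n} \<longrightarrow>
       (\<forall>i\<in>{1..n}. D i (w i)) \<longrightarrow>
       (\<forall>i\<in>{1..n} - K. \<forall>S\<subseteq>M i. w i S = v i S) \<longrightarrow>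
       seq_run n M C v ALG \<longrightarrow> seq_run n M C w ALG' \<longrightarrow>
       (\<forall>i\<in>K. v i (ALG i) - payment C ALG i \<le> v i (ALG' i) - payment C ALG' i) \<longrightarrow>
       (\<forall>i\<in>K. v i (ALG i) - payment C ALG i = v i (ALG' i) - payment C ALG' i))"

definition seq_mech_properties :: "nat \<Rightarrow> (nat \<Rightarrow> 'a set) \<Rightarrow> ('a set \<Rightarrow> real) \<Rightarrow>
    (nat \<Rightarrow> ('a set \<Rightarrow> real) \<Rightarrow> bool) \<Rightarrow> (nat \<Rightarrow> 'a set \<Rightarrow> real) \<Rightarrow> bool" where
  "seq_mech_properties n M C D v \<longleftrightarrow>
     groupstrategyproof n M C D v \<and>
     (\<forall>ALG. seq_run n M C v ALG \<longrightarrow>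
        (\<Sum>i\<in>{1..n}. payment C ALG i) = C (\<Union>i\<in>{1..n}. ALG i) \<and>
        (\<forall>S. allocation n M S \<longrightarrow>
             social_cost n M C v ALG \<le> real n * social_cost n M C v S) \<and>
        (\<forall>i\<in>{1..n}. payment C ALG i \<le> v i (ALG i)) \<and>
        (\<forall>i\<in>{1..n}. 0 \<le> payment C ALG i))"

end

theory Submission
  imports Defs
begin

text \<open>
Budget balance telescopes, and individual rationality and no positive transfers are immediate.
By submodularity marginal costs only grow along the run, so each player's chosen set is at least
as good as any set bought on top of a smaller prefix; with the empty prefix this gives the
\<open>n\<close>-approximation.

For groupstrategyproofness one compares the truthful run with the run under a coalition's
misreport and shows by induction over the players that the misreport never hands a player
more than the truthful run does: with supermodular valuations every misreported allocation is
a subset of the truthful one, and with symmetric valuations and a player-wise symmetric cost it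
is no larger in cardinality.  The maximum-cardinality tie-breaking rule is what turns
``at least as good'' into these comparisons.  Consequently each coalition member faces, in the
misreported run, the marginal costs of a sub-prefix of its truthful prefix, so its utility
there is at most its truthful utility, and a weak improvement for all members is an equality.
\<close>

definition net_utility :: "('a set \<Rightarrow> real) \<Rightarrow> ('a set \<Rightarrow> real) \<Rightarrow> 'a set \<Rightarrow> 'a set \<Rightarrow> real" where
  "net_utility C f A S = f S - (C (A \<union> S) - C A)"

lemma seq_run_iff:
  "seq_run n M C v ALG \<longleftrightarrow> (\<forall>i\<in>{1..n}. ALG i \<subseteq> M i \<and>
     (\<forall>S\<subseteq>M i. net_utility C (v i) (before ALG i) S \<le> net_utility C (v i) (before ALG i) (ALG i)) \<and>
     (\<forall>S\<subseteq>M i. net_utility C (v i) (before ALG i) S = net_utility C (v i) (before ALG i) (ALG i)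
        \<longrightarrow> card S \<le> card (ALG i)))"
  by (simp add: seq_run_def net_utility_def Let_def)

lemma upto_alloc_eq_before_Un:
  assumes "1 \<le> k" shows "upto_alloc F k = before F k \<union> F k"
proof -
  have "{1..k} = insert k {1..<k}" using assms by auto
  then show ?thesis by (auto simp: upto_alloc_def before_def)
qed

lemma before_Suc: "before F (Suc k) = upto_alloc F k"
  by (simp add: before_def upto_alloc_def atLeastLessThanSuc_atLeastAtMost)

lemma before_Un_eq_Union_upd:
  assumes "1 \<le> k" shows "before F k \<union> Z = (\<Union>j\<in>{1..k}. (F(k := Z)) j)"
proof -
  have "{1..k} = insert k {1..<k}" using assms by auto
  then show ?thesis by (auto simp: before_def)
qed

lemma utility_eq_net_utility: "1 \<le> k \<Longrightarrow> f (F k) - payment C F k = net_utility C f (before F k) (F k)"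
  by (simp add: payment_def net_utility_def upto_alloc_eq_before_Un)

lemma sum_payment_telescope: "C {} = 0 \<Longrightarrow> (\<Sum>i\<in>{1..m}. payment C F i) = C (upto_alloc F m)"
  by (induction m) (simp_all add: upto_alloc_def payment_def before_Suc)

text \<open>Taking \<open>Y = {}\<close> shows that marginal costs grow with the prefix; taking \<open>A' = A\<close> shows
  that net utility inherits supermodularity from \<open>f\<close>.\<close>

lemma net_utility_exchange:
  assumes "submodular_on U C" and "A' \<subseteq> A" and "A \<union> X \<union> Y \<subseteq> U" and "A \<inter> X = {}"
    and "f X + f Y \<le> f (X \<union> Y) + f (X \<inter> Y)"
  shows "net_utility C f A Y + net_utility C f A' X \<le> net_utility C f A (X \<union> Y) + net_utility C f A' (X \<inter> Y)"
proof -
  have "C ((A' \<union> X) \<union> (A \<union> Y)) + C ((A' \<union> X) \<inter> (A \<union> Y)) \<le> C (A' \<union> X) + C (A \<union> Y)"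
    using assms(1-3) unfolding submodular_on_def by (metis le_sup_iff sup.absorb_iff2 sup_assoc)
  moreover have "(A' \<union> X) \<union> (A \<union> Y) = A \<union> (X \<union> Y)" "(A' \<union> X) \<inter> (A \<union> Y) = A' \<union> (X \<inter> Y)"
    using assms(2,4) by auto
  ultimately show ?thesis using assms(5) unfolding net_utility_def by simp
qed

lemma net_utility_cong:
  assumes "\<forall>Z\<subseteq>N. C (A \<union> Z) = C (B \<union> Z)" and "S \<subseteq> N"
  shows "net_utility C f A S = net_utility C f B S"
  using assms spec[OF assms(1), of "{}"] by (simp add: net_utility_def)

lemma groupstrategyproofI:
  assumes "\<And>K w ALG ALG'. K \<subseteq> {1..n} \<Longrightarrow> \<forall>i\<in>{1..n} - K. \<forall>S\<subseteq>M i. w i S = v i S \<Longrightarrow>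
      seq_run n M C v ALG \<Longrightarrow> seq_run n M C w ALG' \<Longrightarrow>
      \<forall>i\<in>K. v i (ALG i) - payment C ALG i \<le> v i (ALG' i) - payment C ALG' i \<Longrightarrow>
      \<forall>i\<in>K. v i (ALG i) - payment C ALG i = v i (ALG' i) - payment C ALG' i"
  shows "groupstrategyproof n M C D v"
  unfolding groupstrategyproof_def using assms by (intro allI impI) metis

locale cost_sharing =
  fixes n :: nat and M :: "nat \<Rightarrow> 'a set" and C :: "'a set \<Rightarrow> real"
  assumes valid: "valid_items n M" and cost: "cost_function (items n M) C"
begin

lemma cost_mono: "S \<subseteq> T \<Longrightarrow> T \<subseteq> items n M \<Longrightarrow> C S \<le> C T"
  using cost by (simp add: cost_function_def)

lemma finite_M: "i \<in> {1..n} \<Longrightarrow> finite (M i)"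
  using valid by (simp add: valid_items_def)

lemma M_subset_items: "i \<in> {1..n} \<Longrightarrow> M i \<subseteq> items n M"
  by (auto simp: items_def)

lemma Union_subset_items:
  "J \<subseteq> {1..n} \<Longrightarrow> \<forall>j\<in>J. F j \<subseteq> M j \<Longrightarrow> (\<Union>j\<in>J. F j) \<subseteq> items n M"
  by (auto simp: items_def)

lemma Union_Int_M:
  assumes "J \<subseteq> {1..n}" and "\<forall>j\<in>J. F j \<subseteq> M j" and "m \<in> {1..n}"
  shows "(\<Union>j\<in>J. F j) \<inter> M m = (if m \<in> J then F m else {})"
proof -
  have "F j \<inter> M m = {}" if "j \<in> J" "j \<noteq> m" for j
  proof -
    have "j \<in> {1..n}" using that(1) assms(1) by blast
    then have "M j \<inter> M m = {}"
      using that(2) assms(3) valid by (simp add: valid_items_def disjoint_family_on_def)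
    then show ?thesis using that(1) assms(2) by blast
  qed
  then show ?thesis using assms(2) by auto
qed

lemma seq_run_subset: "seq_run n M C v ALG \<Longrightarrow> k \<in> {1..n} \<Longrightarrow> ALG k \<subseteq> M k"
  by (simp add: seq_run_iff)

lemma seq_run_maximal:
  "seq_run n M C v ALG \<Longrightarrow> k \<in> {1..n} \<Longrightarrow> S \<subseteq> M k \<Longrightarrow>
     net_utility C (v k) (before ALG k) S \<le> net_utility C (v k) (before ALG k) (ALG k)"
  by (simp add: seq_run_iff)

lemma seq_run_max_card:
  "seq_run n M C v ALG \<Longrightarrow> k \<in> {1..n} \<Longrightarrow> S \<subseteq> M k \<Longrightarrow>
     net_utility C (v k) (before ALG k) (ALG k) \<le> net_utility C (v k) (before ALG k) S \<Longrightarrow>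
     card S \<le> card (ALG k)"
proof -
  assume r: "seq_run n M C v ALG" and k: "k \<in> {1..n}" and S: "S \<subseteq> M k"
    and le: "net_utility C (v k) (before ALG k) (ALG k) \<le> net_utility C (v k) (before ALG k) S"
  have "net_utility C (v k) (before ALG k) S = net_utility C (v k) (before ALG k) (ALG k)"
    using seq_run_maximal[OF r k S] le by linarith
  then show ?thesis using r k S unfolding seq_run_iff by blast
qed

lemma seq_run_maximal_for_truthful:
  assumes "seq_run n M C w ALG'" and "k \<in> {1..n}" and "\<forall>S\<subseteq>M k. w k S = v k S"
  shows "\<forall>S\<subseteq>M k. net_utility C (v k) (before ALG' k) S \<le> net_utility C (v k) (before ALG' k) (ALG' k)"
proof (intro allI impI)
  fix S assume S: "S \<subseteq> M k"
  have "w k S = v k S" "w k (ALG' k) = v k (ALG' k)"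
    using S seq_run_subset[OF assms(1,2)] assms(3) by auto
  then show "net_utility C (v k) (before ALG' k) S \<le> net_utility C (v k) (before ALG' k) (ALG' k)"
    using seq_run_maximal[OF assms(1,2) S] unfolding net_utility_def by simp
qed

lemma seq_run_before_subset_items:
  "seq_run n M C v ALG \<Longrightarrow> k \<in> {1..n} \<Longrightarrow> before ALG k \<subseteq> items n M"
  unfolding before_def by (rule Union_subset_items) (auto simp: seq_run_subset)

lemma seq_run_before_Int_M:
  assumes "seq_run n M C v ALG" and "k \<in> {1..n}"
  shows "before ALG k \<inter> M k = {}"
proof -
  have "\<forall>j\<in>{1..<k}. ALG j \<subseteq> M j" using assms seq_run_subset by auto
  moreover have "{1..<k} \<subseteq> {1..n}" using assms(2) by auto
  ultimately show ?thesis using Union_Int_M[of "{1..<k}" ALG k] assms(2) unfolding before_def by simp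
qed

lemma sum_payment_eq_cost: "(\<Sum>i\<in>{1..n}. payment C ALG i) = C (\<Union>i\<in>{1..n}. ALG i)"
  using sum_payment_telescope[of C ALG n] cost by (simp add: cost_function_def upto_alloc_def)

lemma payment_le_valuation:
  assumes "seq_run n M C v ALG" and "k \<in> {1..n}" and "valuation (M k) (v k)"
  shows "payment C ALG k \<le> v k (ALG k)"
  using seq_run_maximal[OF assms(1,2), of "{}"] utility_eq_net_utility[of k "v k" ALG C] assms(2,3)
  by (simp add: net_utility_def valuation_def)

lemma payment_nonneg:
  assumes "seq_run n M C v ALG" and "k \<in> {1..n}"
  shows "0 \<le> payment C ALG k"
proof -
  have "before ALG k \<union> ALG k \<subseteq> items n M"
    using assms seq_run_before_subset_items seq_run_subset M_subset_items by blast
  then show ?thesis using assms(2) cost_mono by (simp add: payment_def upto_alloc_eq_before_Un)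
qed

lemma cost_eq_if_player_cards_eq:
  assumes "playerwise_symmetric n M C" and J: "J \<subseteq> {1..n}"
    and FG: "\<forall>j\<in>J. F j \<subseteq> M j \<and> G j \<subseteq> M j \<and> card (F j) = card (G j)"
  shows "C (\<Union>j\<in>J. F j) = C (\<Union>j\<in>J. G j)"
proof -
  have F: "\<forall>j\<in>J. F j \<subseteq> M j" and G: "\<forall>j\<in>J. G j \<subseteq> M j" using FG by auto
  have "card ((\<Union>j\<in>J. F j) \<inter> M m) = card ((\<Union>j\<in>J. G j) \<inter> M m)" if "m \<in> {1..n}" for m
    unfolding Union_Int_M[OF J F that] Union_Int_M[OF J G that] using FG by simp
  then show ?thesis
    using assms(1) Union_subset_items[OF J F] Union_subset_items[OF J G]
    unfolding playerwise_symmetric_def by blast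
qed

lemma before_cost_eq_if_player_cards_eq:
  assumes "playerwise_symmetric n M C" and "k \<in> {1..n}"
    and "\<forall>j\<in>{1..<k}. F j \<subseteq> M j \<and> G j \<subseteq> M j \<and> card (F j) = card (G j)"
    and "Z \<subseteq> M k" and "Z' \<subseteq> M k" and "card Z = card Z'"
  shows "C (before F k \<union> Z) = C (before G k \<union> Z')"
  using assms cost_eq_if_player_cards_eq[OF assms(1), of "{1..k}" "F(k := Z)" "G(k := Z')"]
  by (simp add: before_Un_eq_Union_upd)

lemma exists_subprefix_same_cost:
  assumes "playerwise_symmetric n M C" and "k \<in> {1..n}"
    and "\<forall>j\<in>{1..<k}. F j \<subseteq> M j \<and> G j \<subseteq> M j \<and> card (G j) \<le> card (F j)"
  shows "\<exists>A\<subseteq>before F k. \<forall>Z\<subseteq>M k. C (A \<union> Z) = C (before G k \<union> Z)"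
proof -
  have "\<forall>j\<in>{1..<k}. \<exists>T. T \<subseteq> F j \<and> card T = card (G j)"
  proof
    fix j assume "j \<in> {1..<k}"
    then have "card (G j) \<le> card (F j)" using assms(3) by blast
    then obtain T where "T \<subseteq> F j" "card T = card (G j)" by (rule obtain_subset_with_card_n)
    then show "\<exists>T. T \<subseteq> F j \<and> card T = card (G j)" by blast
  qed
  then have "\<exists>B. \<forall>j\<in>{1..<k}. B j \<subseteq> F j \<and> card (B j) = card (G j)" by (rule bchoice)
  then obtain B where B: "\<forall>j\<in>{1..<k}. B j \<subseteq> F j \<and> card (B j) = card (G j)"
    by blast
  have "C (before B k \<union> Z) = C (before G k \<union> Z)" if "Z \<subseteq> M k" for Z
    using before_cost_eq_if_player_cards_eq[OF assms(1,2) _ that that] B assms(3) by blast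
  moreover have "before B k \<subseteq> before F k"
    using B unfolding before_def by blast
  ultimately show ?thesis by blast
qed

end

locale submodular_cost_sharing = cost_sharing +
  assumes submodular: "submodular_on (items n M) C"
begin

lemma seq_run_exchange:
  assumes r: "seq_run n M C v ALG" and k: "k \<in> {1..n}" and "A \<subseteq> before ALG k"
    and "X \<subseteq> M k" and "Y \<subseteq> M k" and "f X + f Y \<le> f (X \<union> Y) + f (X \<inter> Y)"
  shows "net_utility C f (before ALG k) Y + net_utility C f A X
           \<le> net_utility C f (before ALG k) (X \<union> Y) + net_utility C f A (X \<inter> Y)"
  using assms seq_run_before_subset_items[OF r k] seq_run_before_Int_M[OF r k] M_subset_items[OF k]
  by (intro net_utility_exchange[OF submodular]) auto

lemma seq_run_net_utility_mono_prefix: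
  assumes "seq_run n M C v ALG" and "k \<in> {1..n}" and "A \<subseteq> before ALG k" and "X \<subseteq> M k"
  shows "net_utility C f A X \<le> net_utility C f (before ALG k) X"
  using seq_run_exchange[where Y="{}" and f=f, OF assms] by (simp add: net_utility_def)

lemma seq_run_net_utility_ge:
  assumes "seq_run n M C v ALG" and "k \<in> {1..n}" and "A \<subseteq> before ALG k" and "X \<subseteq> M k"
  shows "net_utility C (v k) A X \<le> net_utility C (v k) (before ALG k) (ALG k)"
  using seq_run_net_utility_mono_prefix[where f="v k", OF assms] seq_run_maximal[OF assms(1,2,4)]
  by linarith

lemma seq_run_subset_if_union_ge:
  assumes r: "seq_run n M C v ALG" and k: "k \<in> {1..n}" and X: "X \<subseteq> M k"
    and "net_utility C (v k) (before ALG k) (ALG k) \<le> net_utility C (v k) (before ALG k) (X \<union> ALG k)"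
  shows "X \<subseteq> ALG k"
proof -
  have U: "X \<union> ALG k \<subseteq> M k" using X seq_run_subset[OF r k] by auto
  then have "card (X \<union> ALG k) \<le> card (ALG k)" using seq_run_max_card[OF r k U] assms(4) by simp
  moreover have "finite (X \<union> ALG k)" using U finite_M[OF k] finite_subset by blast
  ultimately have "ALG k = X \<union> ALG k" by (intro card_seteq) auto
  then show ?thesis by blast
qed

lemma seq_run_net_utility_le_if_prefix_gain:
  assumes "seq_run n M C v ALG" and "k \<in> {1..n}" and "A \<subseteq> before ALG k" and "X \<subseteq> M k"
    and "net_utility C (v k) (before ALG k) (ALG k) \<le> net_utility C (v k) A X"
  shows "net_utility C (v k) (before ALG k) (ALG k) \<le> net_utility C (v k) (before ALG k) X"
  using seq_run_net_utility_mono_prefix[where f="v k", OF assms(1-4)] assms(5) by linarith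

lemma seq_run_card_le_if_prefix_gain:
  assumes "seq_run n M C v ALG" and "k \<in> {1..n}" and "A \<subseteq> before ALG k" and "X \<subseteq> M k"
    and "net_utility C (v k) (before ALG k) (ALG k) \<le> net_utility C (v k) A X"
  shows "card X \<le> card (ALG k)"
  using seq_run_max_card[OF assms(1,2,4) seq_run_net_utility_le_if_prefix_gain[OF assms]] .

lemma seq_run_subset_if_prefix_gain:
  assumes r: "seq_run n M C v ALG" and k: "k \<in> {1..n}" and "supermodular_on (M k) (v k)"
    and "A \<subseteq> before ALG k" and X: "X \<subseteq> M k"
    and "net_utility C (v k) (before ALG k) (ALG k) \<le> net_utility C (v k) A X"
  shows "X \<subseteq> ALG k"
proof -
  have Y: "ALG k \<subseteq> M k" using seq_run_subset[OF r k] .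
  have "net_utility C (v k) (before ALG k) (ALG k) + net_utility C (v k) (before ALG k) X
      \<le> net_utility C (v k) (before ALG k) (X \<union> ALG k) + net_utility C (v k) (before ALG k) (X \<inter> ALG k)"
    using assms(3) X Y by (intro seq_run_exchange[OF r k]) (auto simp: supermodular_on_def)
  moreover have "net_utility C (v k) (before ALG k) (X \<inter> ALG k) \<le> net_utility C (v k) (before ALG k) (ALG k)"
    using X by (intro seq_run_maximal[OF r k]) auto
  ultimately show ?thesis
    using seq_run_net_utility_le_if_prefix_gain[OF r k assms(4) X assms(6)]
    by (intro seq_run_subset_if_union_ge[OF r k X]) linarith
qed

lemma seq_run_subset_if_prefix_optimal:
  assumes r: "seq_run n M C v ALG" and k: "k \<in> {1..n}" and "supermodular_on (M k) (v k)"
    and "A \<subseteq> before ALG k" and X: "X \<subseteq> M k"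
    and "\<forall>S\<subseteq>M k. net_utility C (v k) A S \<le> net_utility C (v k) A X"
  shows "X \<subseteq> ALG k"
proof -
  have Y: "ALG k \<subseteq> M k" using seq_run_subset[OF r k] .
  have "net_utility C (v k) (before ALG k) (ALG k) + net_utility C (v k) A X
      \<le> net_utility C (v k) (before ALG k) (X \<union> ALG k) + net_utility C (v k) A (X \<inter> ALG k)"
    using assms(3,4) X Y by (intro seq_run_exchange[OF r k]) (auto simp: supermodular_on_def)
  moreover have "net_utility C (v k) A (X \<inter> ALG k) \<le> net_utility C (v k) A X"
    using assms(6) X by (meson inf.coboundedI1)
  ultimately show ?thesis by (intro seq_run_subset_if_union_ge[OF r k X]) linarith
qed

text \<open>A subset of \<open>X\<close> of the truthful cardinality costs as much as \<open>ALG k\<close> by symmetry, and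
  \<open>X\<close> still beats it on the larger prefix; so \<open>X\<close> ties with \<open>ALG k\<close>.\<close>

lemma seq_run_card_le_if_prefix_optimal:
  assumes ps: "playerwise_symmetric n M C" and r: "seq_run n M C v ALG" and k: "k \<in> {1..n}"
    and sym: "symmetric_on (M k) (v k)" and A: "A \<subseteq> before ALG k" and X: "X \<subseteq> M k"
    and opt: "\<forall>S\<subseteq>M k. net_utility C (v k) A S \<le> net_utility C (v k) A X"
  shows "card X \<le> card (ALG k)"
proof (rule ccontr)
  assume "\<not> card X \<le> card (ALG k)"
  then have "card (ALG k) \<le> card X" by simp
  then obtain Y where Y: "Y \<subseteq> X" "card Y = card (ALG k)"
    by (rule obtain_subset_with_card_n)
  have YM: "Y \<subseteq> M k" using Y X by auto
  have "net_utility C (v k) (before ALG k) Y + net_utility C (v k) A X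
      \<le> net_utility C (v k) (before ALG k) X + net_utility C (v k) A Y"
  proof -
    have "X \<union> Y = X" "X \<inter> Y = Y" using Y(1) by auto
    then show ?thesis using seq_run_exchange[where f="v k", OF r k A X YM] by simp
  qed
  moreover have "net_utility C (v k) A Y \<le> net_utility C (v k) A X" using opt YM by blast
  ultimately have "net_utility C (v k) (before ALG k) Y \<le> net_utility C (v k) (before ALG k) X"
    by linarith
  moreover have "net_utility C (v k) (before ALG k) Y = net_utility C (v k) (before ALG k) (ALG k)"
  proof -
    have "\<forall>j\<in>{1..<k}. ALG j \<subseteq> M j" using seq_run_subset[OF r] k by simp
    then have "C (before ALG k \<union> Y) = C (before ALG k \<union> ALG k)"
      using before_cost_eq_if_player_cards_eq[OF ps k _ YM seq_run_subset[OF r k] Y(2)] by blast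
    moreover have "v k Y = v k (ALG k)"
      using sym YM seq_run_subset[OF r k] Y(2) unfolding symmetric_on_def by blast
    ultimately show ?thesis by (simp add: net_utility_def)
  qed
  ultimately have "card X \<le> card (ALG k)" using seq_run_max_card[OF r k X] by simp
  with \<open>\<not> card X \<le> card (ALG k)\<close> show False ..
qed

lemma social_cost_le:
  assumes r: "seq_run n M C v ALG" and vals: "\<forall>i\<in>{1..n}. valuation (M i) (v i)"
    and S: "allocation n M S"
  shows "social_cost n M C v ALG \<le> real n * social_cost n M C v S"
proof -
  define D where "D = (\<Sum>i\<in>{1..n}. v i (M i) - v i (S i))"
  have SM: "S i \<subseteq> M i" if "i \<in> {1..n}" for i using S that by (simp add: allocation_def)
  have player: "v i (S i) - C (S i) \<le> v i (ALG i) - payment C ALG i" if i: "i \<in> {1..n}" for i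
    using seq_run_net_utility_ge[OF r i empty_subsetI SM[OF i]] utility_eq_net_utility[of i "v i" ALG C]
      cost i by (simp add: net_utility_def cost_function_def)
  have "(\<Union>j\<in>{1..n}. S j) \<subseteq> items n M" using SM by (intro Union_subset_items) auto
  then have "C (S i) \<le> C (\<Union>j\<in>{1..n}. S j)" if "i \<in> {1..n}" for i
    using that by (intro cost_mono) auto
  then have sum_C: "(\<Sum>i\<in>{1..n}. C (S i)) \<le> real n * C (\<Union>j\<in>{1..n}. S j)"
    using sum_bounded_above[of "{1..n}" "\<lambda>i. C (S i)"] by simp
  have "D \<le> real n * D"
  proof (cases "n = 0")
    case False
    have "0 \<le> D" unfolding D_def
      using vals SM by (intro sum_nonneg) (simp add: valuation_def)
    then show ?thesis using False by (simp add: mult_le_cancel_right1)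
  qed (simp add: D_def)
  have "social_cost n M C v ALG = (\<Sum>i\<in>{1..n}. v i (M i) - (v i (ALG i) - payment C ALG i))"
    unfolding social_cost_def sum_payment_eq_cost[symmetric] sum.distrib[symmetric]
    by (simp add: algebra_simps)
  also have "\<dots> \<le> (\<Sum>i\<in>{1..n}. v i (M i) - (v i (S i) - C (S i)))"
    using player by (intro sum_mono) (metis diff_left_mono)
  also have "\<dots> = (\<Sum>i\<in>{1..n}. C (S i)) + D"
    unfolding D_def sum.distrib[symmetric] by (simp add: algebra_simps)
  also have "\<dots> \<le> real n * (C (\<Union>j\<in>{1..n}. S j) + D)"
    using sum_C \<open>D \<le> real n * D\<close> by (simp add: algebra_simps)
  also have "\<dots> = real n * social_cost n M C v S"
    by (simp add: social_cost_def D_def)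
  finally show ?thesis .
qed

lemma coalition_utility_eq:
  assumes r: "seq_run n M C v ALG" and K: "K \<subseteq> {1..n}" and sub: "\<forall>i\<in>K. ALG' i \<subseteq> M i"
    and gain: "\<forall>i\<in>K. v i (ALG i) - payment C ALG i \<le> v i (ALG' i) - payment C ALG' i"
    and dom: "\<forall>i\<in>K. \<exists>A\<subseteq>before ALG i. \<forall>Z\<subseteq>M i. C (A \<union> Z) = C (before ALG' i \<union> Z)"
  shows "\<forall>i\<in>K. v i (ALG i) - payment C ALG i = v i (ALG' i) - payment C ALG' i"
proof
  fix i assume "i \<in> K"
  then have i: "i \<in> {1..n}" using K by blast
  obtain A where A: "A \<subseteq> before ALG i" and same: "\<forall>Z\<subseteq>M i. C (A \<union> Z) = C (before ALG' i \<union> Z)"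
    using dom \<open>i \<in> K\<close> by blast
  have "v i (ALG' i) - payment C ALG' i = net_utility C (v i) A (ALG' i)"
    using utility_eq_net_utility[of i "v i" ALG' C] net_utility_cong[OF same] sub \<open>i \<in> K\<close> i by simp
  also have "\<dots> \<le> v i (ALG i) - payment C ALG i"
    using seq_run_net_utility_ge[OF r i A] utility_eq_net_utility[of i "v i" ALG C] sub \<open>i \<in> K\<close> i by simp
  finally show "v i (ALG i) - payment C ALG i = v i (ALG' i) - payment C ALG' i"
    using gain \<open>i \<in> K\<close> by fastforce
qed

lemma misreport_subset_if_supermodular:
  assumes supv: "\<forall>i\<in>{1..n}. supermodular_on (M i) (v i)"
    and truthful: "\<forall>i\<in>{1..n} - K. \<forall>S\<subseteq>M i. w i S = v i S"
    and r: "seq_run n M C v ALG" and r': "seq_run n M C w ALG'"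
    and gain: "\<forall>i\<in>K. v i (ALG i) - payment C ALG i \<le> v i (ALG' i) - payment C ALG' i"
  shows "k \<in> {1..n} \<Longrightarrow> ALG' k \<subseteq> ALG k"
proof (induction k rule: less_induct)
  case (less k)
  have prefix: "before ALG' k \<subseteq> before ALG k"
    using less.IH less.prems unfolding before_def by force
  have X: "ALG' k \<subseteq> M k" using seq_run_subset[OF r' less.prems] .
  have sm: "supermodular_on (M k) (v k)" using supv less.prems by blast
  show ?case
  proof (cases "k \<in> K")
    case True
    then have "net_utility C (v k) (before ALG k) (ALG k) \<le> net_utility C (v k) (before ALG' k) (ALG' k)"
      using gain utility_eq_net_utility[of k "v k" ALG C] utility_eq_net_utility[of k "v k" ALG' C]
        less.prems by auto
    then show ?thesis using seq_run_subset_if_prefix_gain[OF r less.prems sm prefix X] by blast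
  next
    case False
    then show ?thesis
      using seq_run_subset_if_prefix_optimal[OF r less.prems sm prefix X]
        seq_run_maximal_for_truthful[OF r' less.prems] truthful less.prems by blast
  qed
qed

lemma misreport_card_le_if_symmetric:
  assumes ps: "playerwise_symmetric n M C" and symv: "\<forall>i\<in>{1..n}. symmetric_on (M i) (v i)"
    and truthful: "\<forall>i\<in>{1..n} - K. \<forall>S\<subseteq>M i. w i S = v i S"
    and r: "seq_run n M C v ALG" and r': "seq_run n M C w ALG'"
    and gain: "\<forall>i\<in>K. v i (ALG i) - payment C ALG i \<le> v i (ALG' i) - payment C ALG' i"
  shows "k \<in> {1..n} \<Longrightarrow> card (ALG' k) \<le> card (ALG k)"
proof (induction k rule: less_induct)
  case (less k)
  have prefix: "\<forall>j\<in>{1..<k}. ALG j \<subseteq> M j \<and> ALG' j \<subseteq> M j \<and> card (ALG' j) \<le> card (ALG j)"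
  proof
    fix j assume "j \<in> {1..<k}"
    then have j: "j \<in> {1..n}" and "j < k" using less.prems by auto
    then show "ALG j \<subseteq> M j \<and> ALG' j \<subseteq> M j \<and> card (ALG' j) \<le> card (ALG j)"
      using less.IH seq_run_subset[OF r j] seq_run_subset[OF r' j] by blast
  qed
  obtain A where A: "A \<subseteq> before ALG k"
    and same: "\<forall>Z\<subseteq>M k. C (A \<union> Z) = C (before ALG' k \<union> Z)"
    using exists_subprefix_same_cost[OF ps less.prems prefix] by blast
  have X: "ALG' k \<subseteq> M k" using seq_run_subset[OF r' less.prems] .
  have same_net_utility: "net_utility C (v k) A S = net_utility C (v k) (before ALG' k) S"
    if "S \<subseteq> M k" for S
    using net_utility_cong[OF same that] .
  show ?case
  proof (cases "k \<in> K")
    case True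
    have "net_utility C (v k) (before ALG k) (ALG k) \<le> net_utility C (v k) (before ALG' k) (ALG' k)"
      using gain True utility_eq_net_utility[of k "v k" ALG C] utility_eq_net_utility[of k "v k" ALG' C]
        less.prems by auto
    then show ?thesis
      using seq_run_card_le_if_prefix_gain[OF r less.prems A X] same_net_utility[OF X] by simp
  next
    case False
    have "\<forall>S\<subseteq>M k. net_utility C (v k) (before ALG' k) S \<le> net_utility C (v k) (before ALG' k) (ALG' k)"
      using seq_run_maximal_for_truthful[OF r' less.prems] truthful False less.prems by blast
    then have "\<forall>S\<subseteq>M k. net_utility C (v k) A S \<le> net_utility C (v k) A (ALG' k)"
      using same_net_utility X by simp
    then show ?thesis
      using seq_run_card_le_if_prefix_optimal[OF ps r less.prems _ A X] symv less.prems by blast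
  qed
qed

lemma groupstrategyproof_if_supermodular:
  assumes "\<forall>i\<in>{1..n}. supermodular_on (M i) (v i)"
  shows "groupstrategyproof n M C D v"
proof (rule groupstrategyproofI)
  fix K w ALG ALG'
  assume K: "K \<subseteq> {1..n}" and r: "seq_run n M C v ALG" and r': "seq_run n M C w ALG'"
    and truthful: "\<forall>i\<in>{1..n} - K. \<forall>S\<subseteq>M i. w i S = v i S"
    and gain: "\<forall>i\<in>K. v i (ALG i) - payment C ALG i \<le> v i (ALG' i) - payment C ALG' i"
  have "before ALG' i \<subseteq> before ALG i" if "i \<in> {1..n}" for i
    using misreport_subset_if_supermodular[OF assms truthful r r' gain] that
    unfolding before_def by force
  moreover have "\<forall>i\<in>K. ALG' i \<subseteq> M i" using seq_run_subset[OF r'] K by blast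
  ultimately show "\<forall>i\<in>K. v i (ALG i) - payment C ALG i = v i (ALG' i) - payment C ALG' i"
    using coalition_utility_eq[OF r K _ gain] K by blast
qed

lemma groupstrategyproof_if_symmetric:
  assumes "playerwise_symmetric n M C" and "\<forall>i\<in>{1..n}. symmetric_on (M i) (v i)"
  shows "groupstrategyproof n M C D v"
proof (rule groupstrategyproofI)
  fix K w ALG ALG'
  assume K: "K \<subseteq> {1..n}" and r: "seq_run n M C v ALG" and r': "seq_run n M C w ALG'"
    and truthful: "\<forall>i\<in>{1..n} - K. \<forall>S\<subseteq>M i. w i S = v i S"
    and gain: "\<forall>i\<in>K. v i (ALG i) - payment C ALG i \<le> v i (ALG' i) - payment C ALG' i"
  have "\<exists>A\<subseteq>before ALG i. \<forall>Z\<subseteq>M i. C (A \<union> Z) = C (before ALG' i \<union> Z)" if i: "i \<in> {1..n}" for i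
  proof -
    have "\<forall>j\<in>{1..<i}. ALG j \<subseteq> M j \<and> ALG' j \<subseteq> M j \<and> card (ALG' j) \<le> card (ALG j)"
    proof
      fix j assume "j \<in> {1..<i}"
      then have j: "j \<in> {1..n}" using i by auto
      show "ALG j \<subseteq> M j \<and> ALG' j \<subseteq> M j \<and> card (ALG' j) \<le> card (ALG j)"
        using misreport_card_le_if_symmetric[OF assms truthful r r' gain j]
          seq_run_subset[OF r j] seq_run_subset[OF r' j] by blast
    qed
    then show ?thesis by (rule exists_subprefix_same_cost[OF assms(1) i])
  qed
  moreover have "\<forall>i\<in>K. ALG' i \<subseteq> M i" using seq_run_subset[OF r'] K by blast
  ultimately show "\<forall>i\<in>K. v i (ALG i) - payment C ALG i = v i (ALG' i) - payment C ALG' i"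
    using coalition_utility_eq[OF r K _ gain] K by blast
qed

lemma seq_mech_properties_if_groupstrategyproof:
  assumes "groupstrategyproof n M C D v" and "\<forall>i\<in>{1..n}. valuation (M i) (v i)"
  shows "seq_mech_properties n M C D v"
  using assms sum_payment_eq_cost social_cost_le payment_le_valuation payment_nonneg
  unfolding seq_mech_properties_def by blast

end

theorem theorem7p1:
  fixes n :: nat and M :: "nat \<Rightarrow> 'a set" and C :: "'a set \<Rightarrow> real"
    and v :: "nat \<Rightarrow> 'a set \<Rightarrow> real"
  assumes "valid_items n M"
    and "cost_function (items n M) C"
    and "\<forall>i\<in>{1..n}. valuation (M i) (v i)"
  shows "(submodular_on (items n M) C \<and> (\<forall>i\<in>{1..n}. supermodular_on (M i) (v i)) \<longrightarrow>
           seq_mech_properties n M C (\<lambda>i f. valuation (M i) f \<and> supermodular_on (M i) f) v)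
       \<and> (submodular_on (items n M) C \<and> playerwise_symmetric n M C \<and>
           (\<forall>i\<in>{1..n}. symmetric_on (M i) (v i)) \<longrightarrow>
           seq_mech_properties n M C (\<lambda>i f. valuation (M i) f \<and> symmetric_on (M i) f) v)"
proof (intro conjI impI)
  assume h: "submodular_on (items n M) C \<and> (\<forall>i\<in>{1..n}. supermodular_on (M i) (v i))"
  then interpret submodular_cost_sharing n M C
    using assms(1,2) by unfold_locales auto
  show "seq_mech_properties n M C (\<lambda>i f. valuation (M i) f \<and> supermodular_on (M i) f) v"
    using seq_mech_properties_if_groupstrategyproof groupstrategyproof_if_supermodular h assms(3)
    by blast
next
  assume h: "submodular_on (items n M) C \<and> playerwise_symmetric n M C \<and>
    (\<forall>i\<in>{1..n}. symmetric_on (M i) (v i))"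
  then interpret submodular_cost_sharing n M C
    using assms(1,2) by unfold_locales auto
  show "seq_mech_properties n M C (\<lambda>i f. valuation (M i) f \<and> symmetric_on (M i) f) v"
    using seq_mech_properties_if_groupstrategyproof groupstrategyproof_if_symmetric h assms(3)
    by blast
qed

end
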